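(* Let $P$ be a distribution on $\mathcal X\times\mathcal Y$, where every $\mathbf x\in\mathcal X\subseteq\mathbb R^d$ satisfies $\|\mathbf x\|\le 1$ and $\mathcal Y=\{-1,+1\}$ (classification) or $\mathcal Y=[-1,1]$ (regression), and let $(\mathbf x_1,y_1),\dots,(\mathbf x_n,y_n)$ be i.i.d. samples from $P$. Let $R>0$ and $\mathscr W=\{\mathbf w\in\mathbb R^d:\|\mathbf w\|\le R\}$. Let $\ell:\mathbb R\to\mathbb R_+$ be a convex loss such that $z\mapsto\exp(-\alpha\ell(z))$ is concave for $|z|\le R$ (for some $\alpha>0$) and $|\ell'(z)|\le G$. Let $\mathcal L(\mathbf w)=\mathrm E_{(\mathbf x,y)\sim P}[\ell(y\mathbf w^\top\mathbf x)]$ and $\mathbf w_*\in\arg\min_{\mathbf w\in\mathscr W}\mathcal L(\mathbf w)$. Suppose Assumption (I) holds with constant $\theta>0$, i.e. $\mathrm E[(\ell'(y\mathbf w_*^\top\mathbf x))^2\mathbf x\mathbf x^\top]\succeq\theta\,\mathrm E[\mathbf x\mathbf x^\top]$. Let $\widehat{\mathbf w}_*$ be a solution of $\min_{\mathbf w\in\mathscr W}\frac1n\sum_{i=1}^n\ell(y_i\mathbf w^\top\mathbf x_i)$. Define \[ \gamma=\max\left(1,\frac{G^2}{\theta},\frac{G}{\alpha\theta R}\right),\qquad \rho_0=\max\left(32\gamma,\sqrt{\gamma\left(28+\frac{3}{GR}\right)}\right). \] Then for any $t>0$, with probability at least $1-2me^{-t}$, where $m=\lceil\log_2 n\rceil$,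 \[ \mathcal L(\widehat{\mathbf w}_* )-\mathcal L(\mathbf w_* )\le\left(GR\left[32\rho_0+28\right]+3\right)\frac{t+2+d\log n}{n}. \]
   Context: $\ell'$ denotes the derivative of $\ell$; $\succeq$ denotes the positive semidefinite (Loewner) order; expectations are over $(\mathbf x,y)\sim P$. *)

theory Defs
  imports "HOL-Probability.Probability"
begin

definition pop_risk :: "('a::euclidean_space \<times> real) measure \<Rightarrow> (real \<Rightarrow> real) \<Rightarrow> 'a \<Rightarrow> real" where
  "pop_risk P loss w = (\<integral>z. loss (snd z * (w \<bullet> fst z)) \<partial>P)"

definition emp_risk :: "nat \<Rightarrow> (nat \<Rightarrow> 'a::euclidean_space \<times> real) \<Rightarrow> (real \<Rightarrow> real) \<Rightarrow> 'a \<Rightarrow> real" where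
  "emp_risk n S loss w = (\<Sum>i<n. loss (snd (S i) * (w \<bullet> fst (S i)))) / real n"

text \<open>Second-moment matrices, via their quadratic forms v^T M v (Loewner order unfolded).\<close>
definition weighted_second_moment_form ::
  "('a::euclidean_space \<times> real) measure \<Rightarrow> ('a \<times> real \<Rightarrow> real) \<Rightarrow> 'a \<Rightarrow> real" where
  "weighted_second_moment_form P c v = (\<integral>z. c z * (v \<bullet> fst z)\<^sup>2 \<partial>P)"

end

theory Submission
  imports Defs
begin

text \<open>Exp-concavity of the loss turns the optimality of \<open>w\<^sub>*\<close> into the central condition
  \<open>E exp(\<alpha>(\<ell>(w\<^sub>*) - \<ell>(w))) \<le> 1\<close>: otherwise a small step from \<open>w\<^sub>*\<close> towards \<open>w\<close> would decrease the
  risk. With \<open>\<eta> = min \<alpha> (1/(G R))\<close> a second-order bound then gives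
  \<open>E exp(\<eta>/2 (\<ell>(w\<^sub>*) - \<ell>(w))) \<le> 1 - \<eta> (L(w) - L(w\<^sub>*))/20\<close>, so by a Chernoff bound a fixed \<open>w\<close>
  of excess risk \<open>\<tau>\<close> beats \<open>w\<^sub>*\<close> on the sample with probability at most \<open>exp(-n \<eta> \<tau>/20)\<close>.
  A union bound over a grid of \<open>(2n+1)\<^sup>d\<close> points, which approximates every feasible \<open>w\<close> up to
  \<open>2 d R/n\<close>, yields for the empirical risk minimiser the rate \<open>O((t + d log n)/(n \<eta>))\<close> with
  probability \<open>1 - e\<^sup>-\<^sup>t\<close>; this is dominated by the stated bound. Assumption (I) only serves to
  exclude \<open>\<theta> > G\<^sup>2\<close>, in which case \<open>E[x x\<^sup>T] = 0\<close> and all risks coincide.\<close>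

lemma exp_half_le:
  fixes x :: real
  assumes "-2 \<le> x"
  shows "exp (x / 2) \<le> 1 + x / 20 + 9 / 20 * (exp x - 1)"
proof -
  define y where "y = exp (x / 2)"
  have y0: "0 < y" by (simp add: y_def)
  have "1 / 2 \<le> exp (-1 / 2 :: real)" using exp_ge_add_one_self[of "-1 / 2 :: real"] by simp
  then have "1 / 2 * (1 / 2) \<le> exp (-1 / 2) * exp (-1 / 2 :: real)" by (intro mult_mono) auto
  also have "\<dots> = exp (-1)" by (simp flip: exp_add)
  also have "\<dots> \<le> y" using assms by (simp add: y_def)
  finally have y_ge: "2 / 9 \<le> y" by simp
  have "- ln y \<le> 1 / y - 1" using ln_le_minus_one[of "1 / y"] y0 by (simp add: ln_div)
  moreover have "y - 1 + (1 / y - 1) / 10 \<le> 9 / 20 * (y\<^sup>2 - 1)"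
  proof -
    \<comment> \<open>after multiplying by \<open>20 y\<close> the difference of the two sides is \<open>(y - 1)\<^sup>2 (9 y - 2)\<close>\<close>
    have "(y - 1 + (1 / y - 1) / 10) * (20 * y) = 20 * y\<^sup>2 - 22 * y + 2"
      using y0 by (simp add: field_simps power2_eq_square)
    also have "\<dots> = 9 / 20 * (y\<^sup>2 - 1) * (20 * y) - (y - 1)\<^sup>2 * (9 * y - 2)"
      by (simp add: field_simps power2_eq_square)
    also have "\<dots> \<le> 9 / 20 * (y\<^sup>2 - 1) * (20 * y)" using y_ge by simp
    finally have "(y - 1 + (1 / y - 1) / 10) * (20 * y) \<le> 9 / 20 * (y\<^sup>2 - 1) * (20 * y)" .
    then show ?thesis using y0 by simp
  qed
  moreover have "ln y = x / 2" "y\<^sup>2 = exp x" by (simp_all add: y_def power2_eq_square flip: exp_add)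
  ultimately have "y \<le> 1 + x / 20 + 9 / 20 * (exp x - 1)" by (simp add: field_simps)
  then show ?thesis by (simp add: y_def)
qed

lemma exp_concave_combination_le:
  fixes \<alpha> l a b c :: real
  assumes comb: "(1 - l) * exp (- \<alpha> * a) + l * exp (- \<alpha> * b) \<le> exp (- \<alpha> * c)"
    and small: "\<bar>l * (exp (\<alpha> * (a - b)) - 1)\<bar> \<le> 1 / 2"
  shows "\<alpha> * c \<le> \<alpha> * a - l * (exp (\<alpha> * (a - b)) - 1) + 2 * (l * (exp (\<alpha> * (a - b)) - 1))\<^sup>2"
proof -
  define x where "x = l * (exp (\<alpha> * (a - b)) - 1)"
  have "x - 2 * x\<^sup>2 \<le> ln (1 + x)"
    using abs_ln_one_plus_x_minus_x_bound[of x] small by (simp add: x_def abs_le_iff)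
  moreover have "exp (- \<alpha> * a + ln (1 + x)) \<le> exp (- \<alpha> * c)"
  proof -
    have "0 < 1 + x" using small by (simp add: x_def abs_le_iff)
    then have "exp (- \<alpha> * a + ln (1 + x)) = exp (- \<alpha> * a) * (1 + x)"
      by (simp only: exp_add exp_ln)
    also have "\<dots> = (1 - l) * exp (- \<alpha> * a) + l * exp (- \<alpha> * b)"
      by (simp add: x_def algebra_simps flip: exp_add)
    finally show ?thesis using comb by simp
  qed
  ultimately show ?thesis unfolding x_def by simp
qed

lemma abs_diff_le_of_deriv_bound:
  fixes f f' :: "real \<Rightarrow> real"
  assumes deriv: "\<And>z. \<bar>z\<bar> \<le> R \<Longrightarrow> (f has_real_derivative f' z) (at z)"
    and bound: "\<And>z. \<bar>z\<bar> \<le> R \<Longrightarrow> \<bar>f' z\<bar> \<le> G"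
    and "\<bar>a\<bar> \<le> R" "\<bar>b\<bar> \<le> R"
  shows "\<bar>f a - f b\<bar> \<le> G * \<bar>a - b\<bar>"
proof -
  have "norm (f a - f b) \<le> G * norm (a - b)"
  proof (rule differentiable_bound[of "{-R..R}"])
    show "(f has_derivative (*) (f' x)) (at x within {-R..R})" if "x \<in> {-R..R}" for x
      using deriv[of x] that by (auto simp: has_field_derivative_def intro: has_derivative_at_withinI)
    show "onorm ((*) (f' x)) \<le> G" if "x \<in> {-R..R}" for x
      using bound[of x] that by (intro onorm_le) (auto simp: abs_mult mult_right_mono)
  qed (use assms in auto)
  then show ?thesis by simp
qed

definition erm_excess_risk_bound ::
  "('a::euclidean_space \<times> real) measure \<Rightarrow> (real \<Rightarrow> real) \<Rightarrow> real \<Rightarrow> 'a \<Rightarrow> nat \<Rightarrow> real \<Rightarrow> real \<Rightarrow> bool"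
where
  "erm_excess_risk_bound P loss R w_star n p B \<longleftrightarrow>
     (\<exists>E \<in> sets (PiM {..<n} (\<lambda>_. P)). p \<le> measure (PiM {..<n} (\<lambda>_. P)) E \<and>
        (\<forall>S \<in> E. \<forall>w_hat. norm w_hat \<le> R \<longrightarrow>
           (\<forall>w. norm w \<le> R \<longrightarrow> emp_risk n S loss w_hat \<le> emp_risk n S loss w) \<longrightarrow>
           pop_risk P loss w_hat - pop_risk P loss w_star \<le> B))"

lemma erm_excess_risk_bound_mono:
  assumes "erm_excess_risk_bound P loss R w_star n p B" "p' \<le> p" "B \<le> B'"
  shows "erm_excess_risk_bound P loss R w_star n p' B'"
  using assms unfolding erm_excess_risk_bound_def by (meson order_trans)

lemma erm_excess_risk_bound_certain:
  assumes "prob_space P" "p \<le> 1"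
    and "\<And>w. norm w \<le> R \<Longrightarrow> pop_risk P loss w - pop_risk P loss w_star \<le> B"
  shows "erm_excess_risk_bound P loss R w_star n p B"
proof -
  interpret prob_space "PiM {..<n} (\<lambda>_. P)" by (rule prob_space_PiM) (use assms in auto)
  show ?thesis unfolding erm_excess_risk_bound_def
    using assms by (intro bexI[of _ "space (PiM {..<n} (\<lambda>_. P))"]) (auto simp: prob_space)
qed

lemma iid_sum_chernoff:
  fixes g :: "'b \<Rightarrow> real"
  assumes "prob_space P" and g[measurable]: "g \<in> borel_measurable P"
    and int: "integrable P (\<lambda>z. exp (s * g z))" and "0 < s"
  shows "measure (PiM {..<n} (\<lambda>_. P)) {S \<in> space (PiM {..<n} (\<lambda>_. P)). c \<le> (\<Sum>i<n. g (S i))}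
           \<le> exp (- s * c) * (\<integral>z. exp (s * g z) \<partial>P) ^ n"
proof -
  let ?M = "PiM {..<n} (\<lambda>_. P)"
  interpret product_prob_space "\<lambda>_. P" "{..<n}"
    using assms(1) by (simp add: product_prob_space_def product_prob_space_axioms_def
        product_sigma_finite_def prob_space_imp_sigma_finite)
  define U where "U S = (\<Prod>i<n. exp (s * g (S i)))" for S
  have U_exp: "U S = exp (s * (\<Sum>i<n. g (S i)))" for S
    by (simp add: U_def exp_sum sum_distrib_left)
  have "{S \<in> space ?M. c \<le> (\<Sum>i<n. g (S i))} = {S \<in> space ?M. exp (s * c) \<le> U S}"
    using \<open>0 < s\<close> by (auto simp: U_exp)
  moreover have "measure ?M {S \<in> space ?M. exp (s * c) \<le> U S} \<le> (\<integral>S. U S \<partial>?M) / exp (s * c)"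
    unfolding U_def
    by (rule integral_Markov_inequality_measure[where A="space ?M"])
       (auto intro!: product_integrable_prod int prod_nonneg)
  moreover have "(\<integral>S. U S \<partial>?M) = (\<integral>z. exp (s * g z) \<partial>P) ^ n"
    unfolding U_def by (subst product_integral_prod) (auto simp: int)
  ultimately show ?thesis by (simp add: exp_minus field_simps)
qed

lemma grid_point_near:
  fixes w :: "'a::euclidean_space"
  assumes "0 < R" "1 \<le> n" "norm w \<le> R"
  shows "\<exists>k \<in> (\<Pi>\<^sub>E b\<in>Basis. {- int n..int n}).
           norm (w - (\<Sum>b\<in>Basis. (R / real n * of_int (k b)) *\<^sub>R b)) \<le> real DIM('a) * R / real n"
proof -
  define h where "h = R / real n"
  have h0: "0 < h" using assms by (simp add: h_def)
  define k where "k b = (if b \<in> Basis then round ((w \<bullet> b) / h) else undefined)" for b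
  have k: "k b \<in> {- int n..int n} \<and> \<bar>w \<bullet> b - h * of_int (k b)\<bar> \<le> h" if b: "b \<in> Basis" for b
  proof -
    have "\<bar>w \<bullet> b\<bar> \<le> R" using Basis_le_norm[OF b, of w] assms by linarith
    then have "\<bar>(w \<bullet> b) / h\<bar> \<le> R / h" using h0 by (simp add: divide_right_mono)
    also have "R / h = real n" using assms by (simp add: h_def)
    finally have "\<bar>(w \<bullet> b) / h\<bar> \<le> real n" .
    moreover have r: "\<bar>of_int (k b) - (w \<bullet> b) / h\<bar> \<le> 1 / 2"
      using of_int_round_abs_le[of "(w \<bullet> b) / h"] b by (simp add: k_def)
    ultimately have "- real n - 1 / 2 \<le> of_int (k b)" "of_int (k b) \<le> real n + 1 / 2"
      unfolding abs_le_iff by linarith+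
    then have "k b \<in> {- int n..int n}" by simp
    moreover have "\<bar>w \<bullet> b - h * of_int (k b)\<bar> = h * \<bar>of_int (k b) - (w \<bullet> b) / h\<bar>"
      using h0 by (simp add: field_simps abs_mult_pos' abs_minus_commute)
    moreover have "h * \<bar>of_int (k b) - (w \<bullet> b) / h\<bar> \<le> h" using r h0 by simp
    ultimately show ?thesis by simp
  qed
  define g where "g = (\<Sum>b\<in>Basis. (h * of_int (k b)) *\<^sub>R b)"
  have "(w - g) \<bullet> b = w \<bullet> b - h * of_int (k b)" if "b \<in> Basis" for b
    using that by (simp add: g_def inner_diff_left inner_sum_left inner_Basis if_distrib cong: if_cong)
  then have "norm (w - g) \<le> (\<Sum>b\<in>(Basis::'a set). h)"
    using norm_le_l1[of "w - g"] k by (smt (verit, best) sum_mono)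
  moreover have "k \<in> (\<Pi>\<^sub>E b\<in>Basis. {- int n..int n})" using k by (auto simp: k_def)
  ultimately show ?thesis by (auto simp: g_def h_def)
qed

text \<open>The grid points are recentred into the ball, which at most doubles their covering radius.\<close>
lemma ball_net_exists:
  assumes "0 < R" "1 \<le> n"
  shows "\<exists>N :: 'a::euclidean_space set. finite N \<and> (\<forall>v\<in>N. norm v \<le> R)
      \<and> real (card N) \<le> (2 * real n + 1) ^ DIM('a)
      \<and> (\<forall>w. norm w \<le> R \<longrightarrow> (\<exists>v\<in>N. norm (w - v) \<le> 2 * real DIM('a) * R / real n))"
proof -
  define e where "e = real DIM('a) * R / real n"
  define K where "K = (\<Pi>\<^sub>E b\<in>(Basis::'a set). {- int n..int n})"
  define grid where "grid k = (\<Sum>b\<in>(Basis::'a set). (R / real n * of_int (k b)) *\<^sub>R b)"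
    for k :: "'a \<Rightarrow> int"
  define near where "near g \<longleftrightarrow> (\<exists>v::'a. norm v \<le> R \<and> norm (v - g) \<le> e)" for g
  define pick where "pick g = (SOME v::'a. norm v \<le> R \<and> norm (v - g) \<le> e)" for g
  define N where "N = pick ` {g \<in> grid ` K. near g}"
  have fin: "finite K" by (simp add: K_def finite_PiE)
  have "card N \<le> card {g \<in> grid ` K. near g}" unfolding N_def using fin by (intro card_image_le) auto
  also have "\<dots> \<le> card (grid ` K)" using fin by (intro card_mono) auto
  also have "\<dots> \<le> card K" using fin by (rule card_image_le)
  also have "card K = (2 * n + 1) ^ DIM('a)"
  proof -
    have "nat (2 * int n + 1) = 2 * n + 1" by linarith
    then show ?thesis by (simp add: K_def card_PiE)
  qed
  finally have "real (card N) \<le> real ((2 * n + 1) ^ DIM('a))" by (simp only: of_nat_le_iff)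
  also have "\<dots> = (2 * real n + 1) ^ DIM('a)" by (simp add: add.commute)
  finally have card: "real (card N) \<le> (2 * real n + 1) ^ DIM('a)" .
  have pick: "norm (pick g) \<le> R \<and> norm (pick g - g) \<le> e" if "near g" for g
    unfolding pick_def by (rule someI_ex) (use that in \<open>simp add: near_def\<close>)
  have cover: "\<exists>v\<in>N. norm (w - v) \<le> 2 * real DIM('a) * R / real n" if w: "norm w \<le> R" for w
  proof -
    obtain k where k: "k \<in> K" and kw: "norm (w - grid k) \<le> e"
      using grid_point_near[OF assms w] unfolding grid_def e_def K_def by blast
    have g: "near (grid k)" using kw w by (auto simp: near_def norm_minus_commute)
    have "norm (w - pick (grid k)) \<le> norm (w - grid k) + norm (pick (grid k) - grid k)"
      using norm_triangle_ineq4[of "w - grid k" "pick (grid k) - grid k"] by simp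
    also have "\<dots> \<le> e + e" using kw pick[OF g] by linarith
    also have "e + e = 2 * real DIM('a) * R / real n" by (simp add: e_def)
    finally show ?thesis using g k unfolding N_def by blast
  qed
  have "finite N" using fin unfolding N_def by simp
  moreover have "\<forall>v\<in>N. norm v \<le> R" using pick unfolding N_def by blast
  ultimately show ?thesis using card cover by blast
qed

definition bounded_sample :: "'a::real_normed_vector \<times> real \<Rightarrow> bool" where
  "bounded_sample z \<longleftrightarrow> norm (fst z) \<le> 1 \<and> \<bar>snd z\<bar> \<le> 1"

locale exp_concave_erm =
  fixes P :: "('a::euclidean_space \<times> real) measure"
    and loss loss' :: "real \<Rightarrow> real"
    and R G \<alpha> :: real and w_star :: 'a
  assumes P_prob: "prob_space P"
    and P_sets: "sets P = sets borel"
    and P_support: "AE z in P. norm (fst z) \<le> 1 \<and> \<bar>snd z\<bar> \<le> 1"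
    and R_pos: "0 < R" and G_pos: "0 < G" and alpha_pos: "0 < \<alpha>"
    and loss_convex: "convex_on UNIV loss"
    and loss_deriv: "\<And>z. \<bar>z\<bar> \<le> R \<Longrightarrow> (loss has_real_derivative loss' z) (at z)"
    and loss_exp_concave: "concave_on {-R..R} (\<lambda>z. exp (- \<alpha> * loss z))"
    and loss_lipschitz: "\<And>z. \<bar>z\<bar> \<le> R \<Longrightarrow> \<bar>loss' z\<bar> \<le> G"
    and w_star_feasible: "norm w_star \<le> R"
    and w_star_min: "\<And>w. norm w \<le> R \<Longrightarrow> pop_risk P loss w_star \<le> pop_risk P loss w"
begin

sublocale prob_space P by (rule P_prob)

abbreviation samples :: "nat \<Rightarrow> (nat \<Rightarrow> 'a \<times> real) measure" where
  "samples n \<equiv> PiM {..<n} (\<lambda>_. P)"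

definition point_loss :: "'a \<Rightarrow> 'a \<times> real \<Rightarrow> real" where
  "point_loss w z = loss (snd z * (w \<bullet> fst z))"

lemma pop_risk_eq_integral: "pop_risk P loss w = (\<integral>z. point_loss w z \<partial>P)"
  by (simp add: pop_risk_def point_loss_def)

lemma AE_bounded_sample: "AE z in P. bounded_sample z"
  using P_support by (simp add: bounded_sample_def)

lemma measurable_from_borel: "f \<in> borel \<rightarrow>\<^sub>M M \<Longrightarrow> f \<in> P \<rightarrow>\<^sub>M M"
  by (simp only: measurable_cong_sets[OF P_sets refl])

lemma bounded_sample_measurable[measurable]: "Measurable.pred P bounded_sample"
proof (rule measurable_from_borel)
  have [measurable]: "(\<lambda>z::'a \<times> real. norm (fst z)) \<in> borel_measurable borel"
    "(\<lambda>z::'a \<times> real. \<bar>snd z\<bar>) \<in> borel_measurable borel"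
    by (intro borel_measurable_continuous_onI continuous_intros)+
  show "Measurable.pred borel (bounded_sample :: 'a \<times> real \<Rightarrow> bool)"
    unfolding bounded_sample_def by measurable
qed

lemma abs_margin_le:
  assumes "bounded_sample z" "norm w \<le> r"
  shows "\<bar>snd z * (w \<bullet> fst z)\<bar> \<le> r"
proof -
  have "\<bar>w \<bullet> fst z\<bar> \<le> norm w * norm (fst z)" by (rule Cauchy_Schwarz_ineq2)
  also have "\<dots> \<le> r * 1"
    using assms order_trans[OF norm_ge_zero assms(2)] by (intro mult_mono) (auto simp: bounded_sample_def)
  finally have "\<bar>w \<bullet> fst z\<bar> \<le> r" by simp
  moreover have "\<bar>snd z\<bar> \<le> 1" using assms by (simp add: bounded_sample_def)
  ultimately show ?thesis
    by (simp add: abs_mult) (metis abs_ge_zero mult_le_one mult.commute mult_mono order_trans mult_1)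
qed

lemma point_loss_lipschitz:
  assumes "bounded_sample z" "norm w \<le> R" "norm v \<le> R"
  shows "\<bar>point_loss w z - point_loss v z\<bar> \<le> G * norm (w - v)"
proof -
  have "\<bar>point_loss w z - point_loss v z\<bar> \<le> G * \<bar>snd z * (w \<bullet> fst z) - snd z * (v \<bullet> fst z)\<bar>"
    unfolding point_loss_def
    by (intro abs_diff_le_of_deriv_bound[OF loss_deriv loss_lipschitz] abs_margin_le) (use assms in auto)
  also have "snd z * (w \<bullet> fst z) - snd z * (v \<bullet> fst z) = snd z * ((w - v) \<bullet> fst z)"
    by (simp add: inner_diff_left algebra_simps)
  also have "\<bar>\<dots>\<bar> \<le> norm (w - v)" by (rule abs_margin_le[OF assms(1)]) simp
  finally show ?thesis using G_pos by (simp add: mult_left_mono)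
qed

lemma abs_point_loss_diff_le:
  assumes "bounded_sample z" "norm w \<le> R"
  shows "\<bar>point_loss w_star z - point_loss w z\<bar> \<le> 2 * G * R"
proof -
  have "\<bar>point_loss w_star z - point_loss w z\<bar> \<le> G * norm (w_star - w)"
    by (rule point_loss_lipschitz[OF assms(1) w_star_feasible assms(2)])
  also have "\<dots> \<le> G * (2 * R)"
    using norm_triangle_ineq4[of w_star w] w_star_feasible assms G_pos by (intro mult_left_mono) auto
  finally show ?thesis by simp
qed

lemma point_loss_measurable[measurable]: "point_loss w \<in> borel_measurable P"
proof (rule measurable_from_borel, rule borel_measurable_continuous_onI)
  show "continuous_on UNIV (point_loss w)"
    unfolding point_loss_def
    by (intro continuous_on_compose2[OF convex_on_continuous[OF open_UNIV loss_convex]]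
        continuous_intros) auto
qed

lemma integrable_point_loss: "norm w \<le> R \<Longrightarrow> integrable P (point_loss w)"
proof (rule integrable_const_bound[where B="\<bar>loss 0\<bar> + G * R"])
  assume w: "norm w \<le> R"
  show "AE z in P. norm (point_loss w z) \<le> \<bar>loss 0\<bar> + G * R"
    using AE_bounded_sample
  proof (rule AE_mp, intro AE_I2 impI)
    fix z :: "'a \<times> real" assume z: "bounded_sample z"
    have "\<bar>point_loss w z - point_loss 0 z\<bar> \<le> G * norm (w - 0)"
      using R_pos by (intro point_loss_lipschitz z w) auto
    also have "\<dots> \<le> G * R" using w G_pos by (simp add: mult_left_mono)
    finally show "norm (point_loss w z) \<le> \<bar>loss 0\<bar> + G * R" by (simp add: point_loss_def)
  qed
qed simp

lemma pop_risk_lipschitz: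
  assumes "norm w \<le> R" "norm v \<le> R"
  shows "\<bar>pop_risk P loss w - pop_risk P loss v\<bar> \<le> G * norm (w - v)"
proof -
  have "pop_risk P loss w - pop_risk P loss v = (\<integral>z. point_loss w z - point_loss v z \<partial>P)"
    by (simp add: pop_risk_eq_integral integrable_point_loss assms)
  also have "\<bar>\<dots>\<bar> \<le> (\<integral>z. \<bar>point_loss w z - point_loss v z\<bar> \<partial>P)" by (rule integral_abs_bound)
  also have "\<dots> \<le> (\<integral>z. G * norm (w - v) \<partial>P)"
    by (rule integral_mono_AE)
       (use AE_bounded_sample point_loss_lipschitz assms integrable_point_loss in \<open>auto elim!: AE_mp\<close>)
  finally show ?thesis by (simp add: prob_space)
qed

lemma excess_risk_le:
  assumes "norm w \<le> R"
  shows "pop_risk P loss w - pop_risk P loss w_star \<le> 2 * G * R"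
proof -
  have "pop_risk P loss w - pop_risk P loss w_star \<le> G * norm (w - w_star)"
    using pop_risk_lipschitz[OF assms w_star_feasible] by linarith
  also have "\<dots> \<le> G * (2 * R)"
    using norm_triangle_ineq4[of w w_star] assms w_star_feasible G_pos by (intro mult_left_mono) auto
  finally show ?thesis by simp
qed

lemma integrable_exp_point_loss_diff:
  assumes "norm w \<le> R"
  shows "integrable P (\<lambda>z. exp (s * (point_loss w_star z - point_loss w z)))"
proof (rule integrable_const_bound[where B="exp (\<bar>s\<bar> * (2 * G * R))"])
  show "AE z in P. norm (exp (s * (point_loss w_star z - point_loss w z))) \<le> exp (\<bar>s\<bar> * (2 * G * R))"
    using AE_bounded_sample
  proof (rule AE_mp, intro AE_I2 impI)
    fix z :: "'a \<times> real" assume z: "bounded_sample z"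
    have "s * (point_loss w_star z - point_loss w z) \<le> \<bar>s\<bar> * \<bar>point_loss w_star z - point_loss w z\<bar>"
      by (metis abs_ge_self abs_mult)
    also have "\<dots> \<le> \<bar>s\<bar> * (2 * G * R)"
      using abs_point_loss_diff_le[OF z assms] by (intro mult_left_mono) auto
    finally show "norm (exp (s * (point_loss w_star z - point_loss w z))) \<le> exp (\<bar>s\<bar> * (2 * G * R))"
      by simp
  qed
qed measurable

subsection \<open>The central condition\<close>

lemma norm_segment_le:
  assumes "norm w \<le> R" "0 \<le> l" "l \<le> 1"
  shows "norm ((1 - l) *\<^sub>R w_star + l *\<^sub>R w) \<le> R"
  using convexD[OF convex_cball[of 0 R], of w_star w "1 - l" l] assms w_star_feasible by simp

lemma point_loss_segment_le:
  assumes z: "bounded_sample z" and w: "norm w \<le> R"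
    and K: "exp (2 * \<alpha> * G * R) \<le> K" and l: "0 < l" "l \<le> 1 / (2 * K)"
  shows "point_loss ((1 - l) *\<^sub>R w_star + l *\<^sub>R w) z
           \<le> point_loss w_star z
              - (l * (exp (\<alpha> * (point_loss w_star z - point_loss w z)) - 1) - 2 * l\<^sup>2 * K\<^sup>2) / \<alpha>"
proof -
  define a where "a = point_loss w_star z"
  define b where "b = point_loss w z"
  define c where "c = point_loss ((1 - l) *\<^sub>R w_star + l *\<^sub>R w) z"
  define x where "x = l * (exp (\<alpha> * (a - b)) - 1)"
  have "1 \<le> exp (2 * \<alpha> * G * R)" using alpha_pos G_pos R_pos by simp
  then have K1: "1 \<le> K" using K by linarith
  then have "1 / (2 * K) \<le> 1" by simp
  then have l1: "l \<le> 1" using l by linarith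
  define ps where "ps = snd z * (w_star \<bullet> fst z)"
  define p where "p = snd z * (w \<bullet> fst z)"
  have "ps \<in> {-R..R}" "p \<in> {-R..R}"
    using abs_margin_le[OF z w_star_feasible] abs_margin_le[OF z w] by (auto simp: ps_def p_def)
  then have "(1 - l) * exp (- \<alpha> * loss ps) + l * exp (- \<alpha> * loss p)
               \<le> exp (- \<alpha> * loss ((1 - l) *\<^sub>R ps + l *\<^sub>R p))"
    using concave_onD[OF loss_exp_concave, of l ps p] l l1 by simp
  moreover have "snd z * (((1 - l) *\<^sub>R w_star + l *\<^sub>R w) \<bullet> fst z) = (1 - l) *\<^sub>R ps + l *\<^sub>R p"
    by (simp add: ps_def p_def inner_add_left algebra_simps)
  ultimately have comb: "(1 - l) * exp (- \<alpha> * a) + l * exp (- \<alpha> * b) \<le> exp (- \<alpha> * c)"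
    by (simp add: a_def b_def c_def point_loss_def ps_def p_def)
  have "\<alpha> * (a - b) \<le> \<alpha> * (2 * G * R)"
    using abs_point_loss_diff_le[OF z w] alpha_pos by (intro mult_left_mono) (auto simp: a_def b_def)
  then have "exp (\<alpha> * (a - b)) \<le> exp (2 * \<alpha> * G * R)" by (simp add: mult_ac)
  then have "exp (\<alpha> * (a - b)) \<le> K" using K by linarith
  then have "\<bar>exp (\<alpha> * (a - b)) - 1\<bar> \<le> K"
    unfolding abs_le_iff using K1 exp_gt_zero[of "\<alpha> * (a - b)"] by (intro conjI; linarith)
  then have "\<bar>x\<bar> \<le> l * K" using l by (simp add: x_def abs_mult mult_left_mono)
  moreover have "l * K \<le> 1 / 2" using l K1 by (simp add: field_simps)
  ultimately have "\<bar>x\<bar> \<le> 1 / 2" "x\<^sup>2 \<le> (l * K)\<^sup>2"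
    using power_mono[of "\<bar>x\<bar>" "l * K" 2] by auto
  moreover have "\<alpha> * c \<le> \<alpha> * a - x + 2 * x\<^sup>2"
    using exp_concave_combination_le[OF comb] calculation(1) by (simp add: x_def)
  ultimately have "\<alpha> * c \<le> \<alpha> * a - x + 2 * (l * K)\<^sup>2" by linarith
  then have "\<alpha> * c \<le> \<alpha> * a - (x - 2 * l\<^sup>2 * K\<^sup>2)" by (simp add: power_mult_distrib)
  then show ?thesis using alpha_pos by (simp add: a_def b_def c_def x_def field_simps)
qed

lemma pop_risk_segment_le:
  assumes w: "norm w \<le> R"
    and K: "exp (2 * \<alpha> * G * R) \<le> K" and l: "0 < l" "l \<le> 1 / (2 * K)"
  shows "pop_risk P loss ((1 - l) *\<^sub>R w_star + l *\<^sub>R w)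
           \<le> pop_risk P loss w_star
              - (l * ((\<integral>z. exp (\<alpha> * (point_loss w_star z - point_loss w z)) \<partial>P) - 1) - 2 * l\<^sup>2 * K\<^sup>2) / \<alpha>"
proof -
  define V where "V z = exp (\<alpha> * (point_loss w_star z - point_loss w z))" for z
  define w\<^sub>l where "w\<^sub>l = (1 - l) *\<^sub>R w_star + l *\<^sub>R w"
  have "1 \<le> exp (2 * \<alpha> * G * R)" using alpha_pos G_pos R_pos by simp
  then have "1 \<le> K" using K by linarith
  then have "1 / (2 * K) \<le> 1" by simp
  then have "norm w\<^sub>l \<le> R" unfolding w\<^sub>l_def using l w by (intro norm_segment_le) auto
  have V: "integrable P V" unfolding V_def by (rule integrable_exp_point_loss_diff[OF w])
  have "pop_risk P loss w\<^sub>l \<le> (\<integral>z. point_loss w_star z - (l * (V z - 1) - 2 * l\<^sup>2 * K\<^sup>2) / \<alpha> \<partial>P)"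
    unfolding pop_risk_eq_integral
  proof (rule integral_mono_AE)
    show "integrable P (point_loss w\<^sub>l)" by (rule integrable_point_loss) fact
    show "integrable P (\<lambda>z. point_loss w_star z - (l * (V z - 1) - 2 * l\<^sup>2 * K\<^sup>2) / \<alpha>)"
      using V integrable_point_loss[OF w_star_feasible]
      by (intro Bochner_Integration.integrable_diff integrable_divide_zero integrable_mult_right
          integrable_const) auto
    show "AE z in P. point_loss w\<^sub>l z \<le> point_loss w_star z - (l * (V z - 1) - 2 * l\<^sup>2 * K\<^sup>2) / \<alpha>"
      using AE_bounded_sample
      by (rule AE_mp, intro AE_I2 impI) (unfold w\<^sub>l_def V_def, rule point_loss_segment_le[OF _ w K l])
  qed
  also have "\<dots> = pop_risk P loss w_star - (l * ((\<integral>z. V z \<partial>P) - 1) - 2 * l\<^sup>2 * K\<^sup>2) / \<alpha>"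
    using V integrable_point_loss[OF w_star_feasible]
    by (simp add: pop_risk_eq_integral prob_space diff_divide_distrib right_diff_distrib
        Bochner_Integration.integral_diff)
  finally show ?thesis by (simp add: w\<^sub>l_def V_def)
qed

lemma central_condition:
  assumes w: "norm w \<le> R"
  shows "(\<integral>z. exp (\<alpha> * (point_loss w_star z - point_loss w z)) \<partial>P) \<le> 1"
proof (rule ccontr)
  define K where "K = exp (2 * \<alpha> * G * R)"
  define E where "E = (\<integral>z. exp (\<alpha> * (point_loss w_star z - point_loss w z)) \<partial>P)"
  assume "\<not> ?thesis"
  then have E1: "1 < E" by (simp add: E_def)
  have K1: "1 \<le> K" using alpha_pos G_pos R_pos by (simp add: K_def)
  \<comment> \<open>for this step size the quadratic loss term is at most half of the first-order gain\<close>
  define l where "l = min (1 / (2 * K)) ((E - 1) / (4 * K\<^sup>2))"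
  have l: "0 < l" "l \<le> 1 / (2 * K)" using E1 K1 by (auto simp: l_def)
  moreover have "1 / (2 * K) \<le> 1" using K1 by simp
  ultimately have "norm ((1 - l) *\<^sub>R w_star + l *\<^sub>R w) \<le> R"
    using w by (intro norm_segment_le) auto
  then have "pop_risk P loss w_star \<le> pop_risk P loss ((1 - l) *\<^sub>R w_star + l *\<^sub>R w)"
    by (rule w_star_min)
  moreover have "pop_risk P loss ((1 - l) *\<^sub>R w_star + l *\<^sub>R w)
      \<le> pop_risk P loss w_star - (l * (E - 1) - 2 * l\<^sup>2 * K\<^sup>2) / \<alpha>"
    using pop_risk_segment_le[OF w _ l] by (simp add: K_def E_def)
  ultimately have "(l * (E - 1) - 2 * l\<^sup>2 * K\<^sup>2) / \<alpha> \<le> 0" by simp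
  then have "l * (E - 1) \<le> l * (2 * l * K\<^sup>2)"
    using alpha_pos by (simp add: divide_le_0_iff power2_eq_square algebra_simps)
  then have "E - 1 \<le> 2 * l * K\<^sup>2" using l by simp
  also have "\<dots> \<le> 2 * ((E - 1) / (4 * K\<^sup>2)) * K\<^sup>2"
  proof (rule mult_right_mono)
    have "l \<le> (E - 1) / (4 * K\<^sup>2)" by (simp add: l_def)
    then show "2 * l \<le> 2 * ((E - 1) / (4 * K\<^sup>2))" by linarith
  qed simp
  also have "\<dots> = (E - 1) / 2" using K1 by (simp add: field_simps)
  finally show False using E1 by simp
qed

lemma central_condition_mono:
  assumes w: "norm w \<le> R" and \<eta>: "0 < \<eta>" "\<eta> \<le> \<alpha>"
  shows "(\<integral>z. exp (\<eta> * (point_loss w_star z - point_loss w z)) \<partial>P) \<le> 1"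
proof -
  define t where "t = \<eta> / \<alpha>"
  have t: "0 \<le> t" "t \<le> 1" using \<eta> alpha_pos by (auto simp: t_def)
  have convex: "exp (\<eta> * x) \<le> (1 - t) + t * exp (\<alpha> * x)" for x
    using convex_onD[OF exp_convex, of t 0 "\<alpha> * x"] t alpha_pos by (simp add: t_def)
  have "(\<integral>z. exp (\<eta> * (point_loss w_star z - point_loss w z)) \<partial>P)
      \<le> (\<integral>z. (1 - t) + t * exp (\<alpha> * (point_loss w_star z - point_loss w z)) \<partial>P)"
    using integrable_exp_point_loss_diff[OF w] convex by (intro integral_mono) auto
  also have "\<dots> = (1 - t) + t * (\<integral>z. exp (\<alpha> * (point_loss w_star z - point_loss w z)) \<partial>P)"
    using integrable_exp_point_loss_diff[OF w] by (simp add: prob_space)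
  also have "\<dots> \<le> 1"
    using mult_left_mono[OF central_condition[OF w] t(1)] by simp
  finally show ?thesis .
qed

lemma integral_exp_half_point_loss_diff_le:
  assumes w: "norm w \<le> R" and \<eta>: "0 < \<eta>" "\<eta> \<le> \<alpha>" "\<eta> * (G * R) \<le> 1"
  shows "(\<integral>z. exp (\<eta> / 2 * (point_loss w_star z - point_loss w z)) \<partial>P)
          \<le> 1 - \<eta> * (pop_risk P loss w - pop_risk P loss w_star) / 20"
proof -
  let ?d = "\<lambda>z. point_loss w_star z - point_loss w z"
  have pointwise: "exp (\<eta> / 2 * ?d z) \<le> 1 + \<eta> / 20 * ?d z + 9 / 20 * (exp (\<eta> * ?d z) - 1)"
    if z: "bounded_sample z" for z
  proof -
    have "\<bar>\<eta> * ?d z\<bar> \<le> \<eta> * (2 * G * R)" using abs_point_loss_diff_le[OF z w] \<eta> by (simp add: abs_mult)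
    also have "\<dots> \<le> 2" using \<eta>(3) by simp
    finally have "-2 \<le> \<eta> * ?d z" by (simp add: abs_le_iff)
    from exp_half_le[OF this] show ?thesis by simp
  qed
  have "(\<integral>z. exp (\<eta> / 2 * ?d z) \<partial>P) \<le> (\<integral>z. 1 + \<eta> / 20 * ?d z + 9 / 20 * (exp (\<eta> * ?d z) - 1) \<partial>P)"
  proof (rule integral_mono_AE)
    show "integrable P (\<lambda>z. exp (\<eta> / 2 * ?d z))" by (rule integrable_exp_point_loss_diff[OF w])
    show "integrable P (\<lambda>z. 1 + \<eta> / 20 * ?d z + 9 / 20 * (exp (\<eta> * ?d z) - 1))"
      using integrable_exp_point_loss_diff[OF w] integrable_point_loss[OF w]
        integrable_point_loss[OF w_star_feasible] by auto
    show "AE z in P. exp (\<eta> / 2 * ?d z) \<le> 1 + \<eta> / 20 * ?d z + 9 / 20 * (exp (\<eta> * ?d z) - 1)"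
      using AE_bounded_sample by (rule AE_mp) (intro AE_I2 impI pointwise)
  qed
  also have "\<dots> = 1 - \<eta> / 20 * (pop_risk P loss w - pop_risk P loss w_star)
                 + 9 / 20 * ((\<integral>z. exp (\<eta> * ?d z) \<partial>P) - 1)"
    using integrable_exp_point_loss_diff[OF w] integrable_point_loss[OF w]
      integrable_point_loss[OF w_star_feasible]
    by (simp add: pop_risk_eq_integral prob_space algebra_simps)
  also have "\<dots> \<le> 1 - \<eta> / 20 * (pop_risk P loss w - pop_risk P loss w_star)"
    using central_condition_mono[OF w \<eta>(1,2)] by simp
  finally show ?thesis by simp
qed

subsection \<open>Concentration over a net\<close>

lemma empirical_advantage_prob_le:
  assumes w: "norm w \<le> R" and \<eta>: "0 < \<eta>" "\<eta> \<le> \<alpha>" "\<eta> * (G * R) \<le> 1"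
  shows "measure (samples n) {S \<in> space (samples n). - a \<le> (\<Sum>i<n. point_loss w_star (S i) - point_loss w (S i))}
         \<le> exp (\<eta> / 2 * a - real n * (\<eta> * (pop_risk P loss w - pop_risk P loss w_star) / 20))"
proof -
  define x where "x = \<eta> * (pop_risk P loss w - pop_risk P loss w_star) / 20"
  define I where "I = (\<integral>z. exp (\<eta> / 2 * (point_loss w_star z - point_loss w z)) \<partial>P)"
  have "measure (samples n) {S \<in> space (samples n). - a \<le> (\<Sum>i<n. point_loss w_star (S i) - point_loss w (S i))}
      \<le> exp (- (\<eta> / 2) * - a) * I ^ n"
    unfolding I_def using \<eta> by (intro iid_sum_chernoff P_prob integrable_exp_point_loss_diff w) auto
  also have "\<dots> = exp (\<eta> / 2 * a) * I ^ n" by simp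
  also have "\<dots> \<le> exp (\<eta> / 2 * a) * exp (- x) ^ n"
  proof -
    have "I \<le> 1 - x" unfolding I_def x_def by (rule integral_exp_half_point_loss_diff_le[OF w \<eta>])
    then have "I \<le> exp (- x)" using exp_ge_add_one_self[of "- x"] by linarith
    moreover have "0 \<le> I" by (simp add: I_def)
    ultimately show ?thesis by (intro mult_left_mono power_mono) auto
  qed
  also have "\<dots> = exp (\<eta> / 2 * a - real n * x)"
    unfolding exp_of_nat_mult[symmetric] exp_add[symmetric] by simp
  finally show ?thesis by (simp add: x_def)
qed

lemma empirical_advantage_prob_le_threshold:
  assumes w: "norm w \<le> R" and \<eta>: "0 < \<eta>" "\<eta> \<le> \<alpha>" "\<eta> * (G * R) \<le> 1" and n: "1 \<le> n" and "0 < c"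
    and excess: "20 * (t + ln c) / (real n * \<eta>) + 10 * a / real n \<le> pop_risk P loss w - pop_risk P loss w_star"
  shows "measure (samples n) {S \<in> space (samples n). - a \<le> (\<Sum>i<n. point_loss w_star (S i) - point_loss w (S i))}
         \<le> exp (- t) / c"
proof -
  have "measure (samples n) {S \<in> space (samples n). - a \<le> (\<Sum>i<n. point_loss w_star (S i) - point_loss w (S i))}
      \<le> exp (\<eta> / 2 * a - real n * (\<eta> * (pop_risk P loss w - pop_risk P loss w_star) / 20))"
    by (rule empirical_advantage_prob_le[OF w \<eta>])
  also have "\<dots> \<le> exp (\<eta> / 2 * a - real n * (\<eta> * (20 * (t + ln c) / (real n * \<eta>) + 10 * a / real n) / 20))"
    using excess n \<eta> by (auto intro!: mult_left_mono)
  also have "\<eta> / 2 * a - real n * (\<eta> * (20 * (t + ln c) / (real n * \<eta>) + 10 * a / real n) / 20)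
      = - t - ln c"
    using n \<eta> by (simp add: field_simps)
  also have "exp (- t - ln c) = exp (- t) / c" using \<open>0 < c\<close> by (simp add: exp_diff)
  finally show ?thesis .
qed

lemma net_deviation_event:
  assumes N: "finite N" "N \<noteq> {}" "\<forall>v\<in>N. norm v \<le> R" and n: "1 \<le> n"
    and \<eta>: "0 < \<eta>" "\<eta> \<le> \<alpha>" "\<eta> * (G * R) \<le> 1"
  shows "\<exists>E \<in> sets (samples n). 1 - exp (- t) \<le> measure (samples n) E \<and>
    (\<forall>S\<in>E. (\<forall>i<n. bounded_sample (S i)) \<and>
      (\<forall>v\<in>N. - a \<le> (\<Sum>i<n. point_loss w_star (S i) - point_loss v (S i)) \<longrightarrow>
         pop_risk P loss v - pop_risk P loss w_star \<le> 20 * (t + ln (card N)) / (real n * \<eta>) + 10 * a / real n))"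
proof -
  interpret Q: prob_space "samples n" by (rule prob_space_PiM) (rule P_prob)
  define \<tau> where "\<tau> = 20 * (t + ln (card N)) / (real n * \<eta>) + 10 * a / real n"
  define B where "B v = {S \<in> space (samples n). - a \<le> (\<Sum>i<n. point_loss w_star (S i) - point_loss v (S i))}" for v
  define Bad where "Bad = {v \<in> N. \<tau> < pop_risk P loss v - pop_risk P loss w_star}"
  define E where "E = {S \<in> space (samples n). \<forall>i<n. bounded_sample (S i)} - (\<Union>v\<in>Bad. B v)"
  have card: "1 \<le> real (card N)" using N by (simp add: Suc_le_eq card_gt_0_iff)
  have B_sets: "B v \<in> sets (samples n)" for v unfolding B_def by measurable
  have "measure (samples n) (B v) \<le> exp (- t) / card N" if "v \<in> Bad" for v
    unfolding B_def using that N card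
    by (intro empirical_advantage_prob_le_threshold[OF _ \<eta> n]) (auto simp: Bad_def \<tau>_def)
  then have "measure (samples n) (\<Union>v\<in>Bad. B v) \<le> (\<Sum>v\<in>Bad. exp (- t) / card N)"
    using N by (intro order_trans[OF measure_UNION_le] sum_mono B_sets) (auto simp: Bad_def)
  also have "\<dots> = card Bad * (exp (- t) / card N)" by simp
  also have "\<dots> \<le> card N * (exp (- t) / card N)"
    using N(1) by (intro mult_right_mono) (auto simp: Bad_def intro: card_mono)
  finally have bad: "measure (samples n) (\<Union>v\<in>Bad. B v) \<le> exp (- t)" using card by simp
  have bad_sets: "(\<Union>v\<in>Bad. B v) \<in> sets (samples n)" using N B_sets by (auto simp: Bad_def)
  have "AE S in samples n. \<forall>i\<in>{..<n}. bounded_sample (S i)"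
    by (intro eventually_ball_finite ballI AE_PiM_component P_prob AE_bounded_sample) auto
  then have "AE S in samples n. (S \<in> E) = (S \<in> space (samples n) - (\<Union>v\<in>Bad. B v))"
    by (rule AE_mp) (auto simp: E_def intro!: AE_I2)
  then have "measure (samples n) E = measure (samples n) (space (samples n) - (\<Union>v\<in>Bad. B v))"
    using bad_sets by (intro Q.finite_measure_eq_AE) (auto simp: E_def)
  also have "\<dots> = 1 - measure (samples n) (\<Union>v\<in>Bad. B v)" by (rule Q.prob_compl[OF bad_sets])
  finally have "1 - exp (- t) \<le> measure (samples n) E" using bad by linarith
  moreover have "E \<in> sets (samples n)" unfolding E_def using bad_sets by measurable
  moreover have "\<forall>S\<in>E. (\<forall>i<n. bounded_sample (S i)) \<and>
      (\<forall>v\<in>N. - a \<le> (\<Sum>i<n. point_loss w_star (S i) - point_loss v (S i)) \<longrightarrow>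
         pop_risk P loss v - pop_risk P loss w_star \<le> \<tau>)"
    by (auto simp: E_def Bad_def B_def not_less)
  ultimately show ?thesis unfolding \<tau>_def by blast
qed

lemma erm_empirical_advantage:
  assumes S: "\<forall>i<n. bounded_sample (S i)" and n: "1 \<le> n"
    and w_hat: "norm w_hat \<le> R" and erm: "\<forall>w. norm w \<le> R \<longrightarrow> emp_risk n S loss w_hat \<le> emp_risk n S loss w"
    and v: "norm v \<le> R" "norm (w_hat - v) \<le> \<epsilon>"
  shows "- (real n * G * \<epsilon>) \<le> (\<Sum>i<n. point_loss w_star (S i) - point_loss v (S i))"
proof -
  have "(\<Sum>i<n. point_loss w_hat (S i)) \<le> (\<Sum>i<n. point_loss w_star (S i))"
    using erm w_star_feasible n by (auto simp: emp_risk_def point_loss_def divide_le_cancel)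
  moreover have "(\<Sum>i<n. point_loss v (S i)) \<le> (\<Sum>i<n. point_loss w_hat (S i) + G * \<epsilon>)"
  proof (rule sum_mono)
    fix i assume "i \<in> {..<n}"
    then have "\<bar>point_loss v (S i) - point_loss w_hat (S i)\<bar> \<le> G * norm (v - w_hat)"
      using S v w_hat by (intro point_loss_lipschitz) auto
    also have "\<dots> \<le> G * \<epsilon>" using v G_pos by (simp add: norm_minus_commute)
    finally show "point_loss v (S i) \<le> point_loss w_hat (S i) + G * \<epsilon>" by linarith
  qed
  ultimately show ?thesis by (simp add: sum.distrib sum_subtractf)
qed

lemma erm_excess_risk_le_near:
  assumes S: "\<forall>i<n. bounded_sample (S i)" and n: "1 \<le> n"
    and w_hat: "norm w_hat \<le> R" and erm: "\<forall>w. norm w \<le> R \<longrightarrow> emp_risk n S loss w_hat \<le> emp_risk n S loss w"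
    and v: "norm v \<le> R" "norm (w_hat - v) \<le> \<epsilon>"
    and good: "- (real n * G * \<epsilon>) \<le> (\<Sum>i<n. point_loss w_star (S i) - point_loss v (S i)) \<Longrightarrow>
      pop_risk P loss v - pop_risk P loss w_star \<le> \<tau>"
  shows "pop_risk P loss w_hat - pop_risk P loss w_star \<le> \<tau> + G * \<epsilon>"
proof -
  have "pop_risk P loss v - pop_risk P loss w_star \<le> \<tau>"
    by (rule good, rule erm_empirical_advantage[OF S n w_hat erm v])
  moreover have "pop_risk P loss w_hat - pop_risk P loss v \<le> G * norm (w_hat - v)"
    using pop_risk_lipschitz[OF w_hat v(1)] by linarith
  moreover have "G * norm (w_hat - v) \<le> G * \<epsilon>" using v G_pos by simp
  ultimately show ?thesis by linarith
qed

lemma erm_fast_rate: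
  assumes n: "1 \<le> n" and t: "0 < t"
  shows "erm_excess_risk_bound P loss R w_star n (1 - exp (- t))
     (20 * (t + real DIM('a) * ln (2 * real n + 1)) / (real n * min \<alpha> (1 / (G * R)))
        + 22 * G * R * real DIM('a) / real n)"
proof -
  define \<eta> where "\<eta> = min \<alpha> (1 / (G * R))"
  define \<epsilon> where "\<epsilon> = 2 * real DIM('a) * R / real n"
  have GR: "0 < G * R" using G_pos R_pos by simp
  have \<eta>: "0 < \<eta>" "\<eta> \<le> \<alpha>" "\<eta> * (G * R) \<le> 1"
    using alpha_pos GR by (auto simp: \<eta>_def min_def field_simps)
  obtain N :: "'a set" where N: "finite N" "\<forall>v\<in>N. norm v \<le> R" "real (card N) \<le> (2 * real n + 1) ^ DIM('a)"
    and cover: "\<forall>w. norm w \<le> R \<longrightarrow> (\<exists>v\<in>N. norm (w - v) \<le> \<epsilon>)"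
    using ball_net_exists[OF R_pos n] unfolding \<epsilon>_def by blast
  have "N \<noteq> {}" using cover w_star_feasible by blast
  then have ln_card: "ln (card N) \<le> real DIM('a) * ln (2 * real n + 1)"
    using N(1,3) by (simp add: ln_realpow[symmetric] card_gt_0_iff)
  obtain E where E: "E \<in> sets (samples n)" "1 - exp (- t) \<le> measure (samples n) E"
    and good: "\<forall>S\<in>E. (\<forall>i<n. bounded_sample (S i)) \<and>
      (\<forall>v\<in>N. - (real n * G * \<epsilon>) \<le> (\<Sum>i<n. point_loss w_star (S i) - point_loss v (S i)) \<longrightarrow>
         pop_risk P loss v - pop_risk P loss w_star
           \<le> 20 * (t + ln (card N)) / (real n * \<eta>) + 10 * (real n * G * \<epsilon>) / real n)"
    using net_deviation_event[OF N(1) \<open>N \<noteq> {}\<close> N(2) n \<eta>] by blast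
  show ?thesis unfolding erm_excess_risk_bound_def
  proof (intro bexI[OF _ E(1)] conjI ballI allI impI)
    fix S w_hat assume S: "S \<in> E" and w_hat: "norm w_hat \<le> R"
      and erm: "\<forall>w. norm w \<le> R \<longrightarrow> emp_risk n S loss w_hat \<le> emp_risk n S loss w"
    obtain v where v: "v \<in> N" "norm (w_hat - v) \<le> \<epsilon>" using cover w_hat by blast
    have "pop_risk P loss w_hat - pop_risk P loss w_star
        \<le> 20 * (t + ln (card N)) / (real n * \<eta>) + 10 * (real n * G * \<epsilon>) / real n + G * \<epsilon>"
      using good S v N(2) by (intro erm_excess_risk_le_near[OF _ n w_hat erm]) auto
    moreover have "10 * (real n * G * \<epsilon>) / real n + G * \<epsilon> = 22 * G * R * real DIM('a) / real n"
      using n by (simp add: \<epsilon>_def field_simps)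
    moreover have "20 * (t + ln (card N)) / (real n * \<eta>)
        \<le> 20 * (t + real DIM('a) * ln (2 * real n + 1)) / (real n * \<eta>)"
      using ln_card n \<eta> by (intro divide_right_mono) auto
    ultimately show "pop_risk P loss w_hat - pop_risk P loss w_star
        \<le> 20 * (t + real DIM('a) * ln (2 * real n + 1)) / (real n * min \<alpha> (1 / (G * R)))
           + 22 * G * R * real DIM('a) / real n"
      unfolding \<eta>_def by linarith
  qed (use E in auto)
qed

subsection \<open>The degenerate case of Assumption (I)\<close>

lemma integrable_inner_sq: "integrable P (\<lambda>z. (v \<bullet> fst z)\<^sup>2)"
proof (rule integrable_const_bound[where B="(norm v)\<^sup>2"])
  show "AE z in P. norm ((v \<bullet> fst z)\<^sup>2) \<le> (norm v)\<^sup>2"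
    using AE_bounded_sample
  proof (rule AE_mp, intro AE_I2 impI)
    fix z :: "'a \<times> real" assume "bounded_sample z"
    then have "\<bar>v \<bullet> fst z\<bar> \<le> norm v" using abs_margin_le[of "(fst z, 1)" v] by (simp add: bounded_sample_def)
    then show "norm ((v \<bullet> fst z)\<^sup>2) \<le> (norm v)\<^sup>2" using power_mono[of "\<bar>v \<bullet> fst z\<bar>" "norm v" 2] by simp
  qed
  show "(\<lambda>z. (v \<bullet> fst z)\<^sup>2) \<in> borel_measurable P"
    by (intro measurable_from_borel borel_measurable_continuous_onI continuous_intros)
qed

lemma weighted_second_moment_form_le:
  "weighted_second_moment_form P (\<lambda>z. (loss' (snd z * (w_star \<bullet> fst z)))\<^sup>2) v
     \<le> G\<^sup>2 * weighted_second_moment_form P (\<lambda>z. 1) v"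
proof -
  let ?f = "\<lambda>z. (loss' (snd z * (w_star \<bullet> fst z)))\<^sup>2 * (v \<bullet> fst z)\<^sup>2"
  have bound: "AE z in P. ?f z \<le> G\<^sup>2 * (v \<bullet> fst z)\<^sup>2"
    using AE_bounded_sample
  proof (rule AE_mp, intro AE_I2 impI)
    fix z :: "'a \<times> real" assume "bounded_sample z"
    then have "\<bar>loss' (snd z * (w_star \<bullet> fst z))\<bar> \<le> G"
      by (intro loss_lipschitz abs_margin_le w_star_feasible)
    then have "(loss' (snd z * (w_star \<bullet> fst z)))\<^sup>2 \<le> G\<^sup>2"
      using power_mono[of "\<bar>loss' (snd z * (w_star \<bullet> fst z))\<bar>" G 2] by simp
    then show "?f z \<le> G\<^sup>2 * (v \<bullet> fst z)\<^sup>2" by (rule mult_right_mono) simp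
  qed
  then have "(\<integral>z. ?f z \<partial>P) \<le> (\<integral>z. G\<^sup>2 * (v \<bullet> fst z)\<^sup>2 \<partial>P)"
  proof (cases "integrable P ?f")
    case True
    then show ?thesis using integrable_inner_sq[of v] bound by (intro integral_mono_AE) auto
  qed (simp add: not_integrable_integral_eq)
  then show ?thesis by (simp add: weighted_second_moment_form_def)
qed

lemma pop_risk_eq_loss_zero:
  assumes \<theta>: "G\<^sup>2 < \<theta>"
    and assumption_I: "\<And>v. \<theta> * weighted_second_moment_form P (\<lambda>z. 1) v
         \<le> weighted_second_moment_form P (\<lambda>z. (loss' (snd z * (w_star \<bullet> fst z)))\<^sup>2) v"
  shows "pop_risk P loss w = loss 0"
proof -
  define M where "M = weighted_second_moment_form P (\<lambda>z. 1) w"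
  have M0: "0 \<le> M" by (simp add: M_def weighted_second_moment_form_def)
  have "\<theta> * M \<le> G\<^sup>2 * M"
    using assumption_I[of w] weighted_second_moment_form_le[of w] by (simp add: M_def)
  then have "(\<theta> - G\<^sup>2) * M \<le> 0" by (simp add: algebra_simps)
  then have "M \<le> 0" using \<theta> by (simp add: mult_le_0_iff)
  with M0 have "M = 0" by linarith
  then have "(\<integral>z. (w \<bullet> fst z)\<^sup>2 \<partial>P) = 0" by (simp add: M_def weighted_second_moment_form_def)
  then have "AE z in P. (w \<bullet> fst z)\<^sup>2 = 0"
    using integral_nonneg_eq_0_iff_AE[OF integrable_inner_sq] by simp
  then have "AE z in P. point_loss w z = loss 0" by (rule AE_mp) (simp add: point_loss_def)
  then have "(\<integral>z. point_loss w z \<partial>P) = (\<integral>z. loss 0 \<partial>P)" by (intro integral_cong_AE) auto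
  then show ?thesis by (simp add: pop_risk_eq_integral prob_space)
qed

end

lemma ln_double_plus_one_le:
  assumes "2 \<le> n"
  shows "ln (2 * real n + 1) \<le> 3 * ln (real n)"
proof -
  have "2 * 2 \<le> real n * real n" using assms by (intro mult_mono) auto
  then have "4 * real n \<le> real n ^ 3" using assms by (simp add: power3_eq_cube mult_right_mono)
  then have "2 * real n + 1 \<le> real n ^ 3" using assms by linarith
  then have "ln (2 * real n + 1) \<le> ln (real n ^ 3)" using assms by simp
  also have "\<dots> = 3 * ln (real n)" using assms by (simp add: ln_realpow)
  finally show ?thesis .
qed

lemma fast_rate_le:
  fixes d n :: nat
  assumes n: "2 \<le> n" and t: "0 < t" and \<eta>: "0 < \<eta>" "1 / \<eta> \<le> K" and GR: "0 \<le> G * R" "G * R \<le> K"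
  shows "20 * (t + real d * ln (2 * real n + 1)) / (real n * \<eta>) + 22 * G * R * real d / real n
         \<le> 104 * K * (t + 2 + real d * ln (real n)) / real n"
proof -
  define X where "X = t + 2 + real d * ln (real n)"
  have "ln 2 \<le> ln (real n)" using n by simp
  then have "2 / 3 \<le> ln (real n)" using ln2_ge_two_thirds by linarith
  then have "real d * (2 / 3) \<le> real d * ln (real n)" by (intro mult_left_mono) auto
  then have d: "0 \<le> real d * ln (real n)" "real d \<le> 2 * X"
    using t of_nat_0_le_iff[of d, where 'a=real] unfolding X_def by argo+
  define A where "A = t + real d * ln (2 * real n + 1)"
  have "real d * ln (2 * real n + 1) \<le> real d * (3 * ln (real n))"
    using ln_double_plus_one_le[OF n] by (intro mult_left_mono) auto
  then have "A \<le> 3 * X" using t d(1) by (simp add: A_def X_def algebra_simps)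
  moreover have "0 \<le> A" using t n by (simp add: A_def)
  ultimately have "A * (1 / \<eta>) \<le> (3 * X) * K" using \<eta> by (intro mult_mono) auto
  then have a: "A * (1 / \<eta>) \<le> 3 * (K * X)" by (simp add: mult_ac)
  have "G * R * real d \<le> K * (2 * X)" using GR d(2) by (intro mult_mono) auto
  then have b: "G * R * real d \<le> 2 * (K * X)" by (simp add: mult_ac)
  have "20 * A / \<eta> + 22 * G * R * real d = 20 * (A * (1 / \<eta>)) + 22 * (G * R * real d)" by simp
  also have "\<dots> \<le> 104 * (K * X)" using a b by linarith
  finally have "20 * A / \<eta> + 22 * G * R * real d \<le> 104 * K * X" by (simp add: mult.assoc)
  then have "(20 * A / \<eta> + 22 * G * R * real d) / real n \<le> 104 * K * X / real n"
    by (rule divide_right_mono) simp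
  moreover have "(20 * A / \<eta> + 22 * G * R * real d) / real n
      = 20 * A / (real n * \<eta>) + 22 * G * R * real d / real n"
    using n \<eta> by (simp add: field_simps)
  ultimately show ?thesis by (simp add: A_def X_def)
qed

lemma fast_rate_le_theorem_rate:
  fixes d n :: nat
  assumes G: "0 < G" and R: "0 < R" and \<alpha>: "0 < \<alpha>" and \<theta>: "0 < \<theta>" "\<theta> \<le> G\<^sup>2"
    and n: "2 \<le> n" and t: "0 < t"
  defines "\<gamma> \<equiv> max 1 (max (G\<^sup>2 / \<theta>) (G / (\<alpha> * \<theta> * R)))"
  shows "20 * (t + real d * ln (2 * real n + 1)) / (real n * min \<alpha> (1 / (G * R)))
           + 22 * G * R * real d / real n
         \<le> (G * R * (32 * max (32 * \<gamma>) (sqrt (\<gamma> * (28 + 3 / (G * R)))) + 28) + 3)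
             * (t + 2 + real d * ln (real n)) / real n"
proof -
  define K where "K = G * R * \<gamma>"
  have GR: "0 < G * R" using G R by simp
  have \<gamma>: "1 \<le> \<gamma>" "G / (\<alpha> * \<theta> * R) \<le> \<gamma>" by (simp_all add: \<gamma>_def)
  have "G * R \<le> K" using mult_left_mono[OF \<gamma>(1), of "G * R"] GR by (simp add: K_def)
  moreover have "1 / min \<alpha> (1 / (G * R)) \<le> K"
  proof -
    have "1 / \<alpha> \<le> G\<^sup>2 / (\<alpha> * \<theta>)" using \<theta> \<alpha> by (simp add: field_simps)
    also have "\<dots> = G * R * (G / (\<alpha> * \<theta> * R))" using R by (simp add: power2_eq_square)
    also have "\<dots> \<le> K" using mult_left_mono[OF \<gamma>(2), of "G * R"] GR by (simp add: K_def)
    finally show ?thesis using \<open>G * R \<le> K\<close> GR \<alpha> by (simp add: min_def)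
  qed
  ultimately have "20 * (t + real d * ln (2 * real n + 1)) / (real n * min \<alpha> (1 / (G * R)))
      + 22 * G * R * real d / real n \<le> 104 * K * (t + 2 + real d * ln (real n)) / real n"
    using GR \<alpha> by (intro fast_rate_le n t) auto
  also have "\<dots> \<le> (G * R * (32 * max (32 * \<gamma>) (sqrt (\<gamma> * (28 + 3 / (G * R)))) + 28) + 3)
             * (t + 2 + real d * ln (real n)) / real n"
  proof (intro divide_right_mono mult_right_mono)
    have "104 * K \<le> G * R * (32 * (32 * \<gamma>))" using G R \<gamma>(1) by (simp add: K_def)
    also have "\<dots> \<le> G * R * (32 * max (32 * \<gamma>) (sqrt (\<gamma> * (28 + 3 / (G * R)))))"
      using GR by (intro mult_left_mono) auto
    finally show "104 * K \<le> G * R * (32 * max (32 * \<gamma>) (sqrt (\<gamma> * (28 + 3 / (G * R)))) + 28) + 3"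
      using GR by (simp add: algebra_simps)
    show "0 \<le> t + 2 + real d * ln (real n)" using t n by simp
  qed simp
  finally show ?thesis .
qed

lemma trivial_rate_le_theorem_rate:
  fixes d n :: nat
  assumes "0 < G" "0 < R" "0 < t" "1 \<le> n" "0 \<le> \<rho>"
  shows "2 * G * R \<le> (G * R * (32 * \<rho> + 28) + 3) * (t + 2 + real d * ln (real n))"
proof -
  have "G * R * 1 \<le> G * R * (32 * \<rho> + 28)" using assms by (intro mult_left_mono) auto
  then have "2 * (G * R) \<le> (G * R * (32 * \<rho> + 28) + 3) * 2" by simp
  also have "\<dots> \<le> (G * R * (32 * \<rho> + 28) + 3) * (t + 2 + real d * ln (real n))"
    using assms by (intro mult_left_mono) auto
  finally show ?thesis by (simp add: mult.assoc)
qed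

theorem theorem1:
  fixes P :: "('a::euclidean_space \<times> real) measure"
    and loss loss' :: "real \<Rightarrow> real"
    and R G \<alpha> \<theta> t :: real
    and n :: nat
    and w_star :: 'a
  assumes P_prob: "prob_space P"
    and P_sets: "sets P = sets borel"
    and P_support: "AE z in P. norm (fst z) \<le> 1 \<and> \<bar>snd z\<bar> \<le> 1"
    and R_pos: "R > 0" and G_pos: "G > 0" and alpha_pos: "\<alpha> > 0" and theta_pos: "\<theta> > 0"
    and loss_nonneg: "\<And>z. loss z \<ge> 0"
    and loss_convex: "convex_on UNIV loss"
    and loss_deriv: "\<And>z. \<bar>z\<bar> \<le> R \<Longrightarrow> (loss has_real_derivative loss' z) (at z)"
    and loss_exp_concave: "concave_on {-R..R} (\<lambda>z. exp (- \<alpha> * loss z))"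
    and loss_lipschitz: "\<And>z. \<bar>z\<bar> \<le> R \<Longrightarrow> \<bar>loss' z\<bar> \<le> G"
    and w_star_feasible: "norm w_star \<le> R"
    and w_star_min: "\<And>w. norm w \<le> R \<Longrightarrow> pop_risk P loss w_star \<le> pop_risk P loss w"
    and assumption_I: "\<And>v. weighted_second_moment_form P
                 (\<lambda>z. (loss' (snd z * (w_star \<bullet> fst z)))\<^sup>2) v
               \<ge> \<theta> * weighted_second_moment_form P (\<lambda>z. 1) v"
    and n_pos: "n \<ge> 1"
    and t_pos: "t > 0"
  shows "let \<gamma> = max 1 (max (G\<^sup>2 / \<theta>) (G / (\<alpha> * \<theta> * R)));
             \<rho>\<^sub>0 = max (32 * \<gamma>) (sqrt (\<gamma> * (28 + 3 / (G * R))));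
             m = \<lceil>log 2 (real n)\<rceil>
         in \<exists>E \<in> sets (PiM {..<n} (\<lambda>_. P)).
              measure (PiM {..<n} (\<lambda>_. P)) E \<ge> 1 - 2 * real_of_int m * exp (- t) \<and>
              (\<forall>S \<in> E. \<forall>w_hat. norm w_hat \<le> R \<longrightarrow>
                 (\<forall>w. norm w \<le> R \<longrightarrow> emp_risk n S loss w_hat \<le> emp_risk n S loss w) \<longrightarrow>
                 pop_risk P loss w_hat - pop_risk P loss w_star
                   \<le> (G * R * (32 * \<rho>\<^sub>0 + 28) + 3) * (t + 2 + real DIM('a) * ln (real n)) / real n)"
proof -
  interpret exp_concave_erm P loss loss' R G \<alpha> w_star
    by (rule exp_concave_erm.intro[OF P_prob P_sets P_support R_pos G_pos alpha_pos loss_convex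
          loss_deriv loss_exp_concave loss_lipschitz w_star_feasible w_star_min])
  define \<gamma> where "\<gamma> = max 1 (max (G\<^sup>2 / \<theta>) (G / (\<alpha> * \<theta> * R)))"
  define m where "m = \<lceil>log 2 (real n)\<rceil>"
  define C where "C = G * R * (32 * max (32 * \<gamma>) (sqrt (\<gamma> * (28 + 3 / (G * R)))) + 28) + 3"
  define X where "X = t + 2 + real DIM('a) * ln (real n)"
  have "erm_excess_risk_bound P loss R w_star n (1 - 2 * real_of_int m * exp (- t)) (C * X / real n)"
  proof (cases "G\<^sup>2 < \<theta> \<or> n = 1")
    case True
    have "0 \<le> max (32 * \<gamma>) (sqrt (\<gamma> * (28 + 3 / (G * R))))" by (simp add: \<gamma>_def le_max_iff_disj)
    then have "2 * G * R \<le> C * X"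
      unfolding C_def X_def using G_pos R_pos t_pos n_pos by (intro trivial_rate_le_theorem_rate)
    moreover have "0 < G * R" using G_pos R_pos by simp
    ultimately have "2 * G * R \<le> C * X" "0 \<le> C * X" by simp_all
    then have "pop_risk P loss w - pop_risk P loss w_star \<le> C * X / real n" if "norm w \<le> R" for w
      using True excess_risk_le[OF that] pop_risk_eq_loss_zero[OF _ assumption_I] by auto
    moreover have "0 \<le> log 2 (real n)" using n_pos by simp
    then have "0 \<le> m" by (simp add: m_def)
    ultimately show ?thesis by (intro erm_excess_risk_bound_certain P_prob) auto
  next
    case False
    then have "2 \<le> n" "\<theta> \<le> G\<^sup>2" using n_pos by auto
    moreover have "1 \<le> m" using \<open>2 \<le> n\<close> by (simp add: m_def)
    ultimately show ?thesis
      using G_pos R_pos alpha_pos theta_pos t_pos unfolding C_def X_def \<gamma>_def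
      by (intro erm_excess_risk_bound_mono[OF erm_fast_rate[OF n_pos t_pos]] fast_rate_le_theorem_rate)
        auto
  qed
  then show ?thesis by (simp add: Let_def erm_excess_risk_bound_def \<gamma>_def m_def C_def X_def)
qed

end
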